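(* Let $m,n\in\mathbb{N}$, let $a_{\ell}>0$ and $z_{\ell}<1$ be real for $1\le\ell\le m$, and let $s_{j,\ell}\in\mathbb{C}$ with $\Re(s_{j,\ell})>0$ for $1\le j\le n$, $1\le\ell\le m$. Then the $n\times n$ matrix \[ \left(\prod_{\ell=1}^{m}\Gamma(s_{j,\ell}+\overline{s_{k,\ell}})\,\Phi(z_{\ell},\,s_{j,\ell}+\overline{s_{k,\ell}},\,a_{\ell})\right)_{j,k=1}^{n} \] is positive semidefinite.
   Context: $\Phi(z,s,a)$ is the Lerch transcendent, the analytic continuation of $\sum_{n=0}^{\infty}\frac{z^{n}}{(a+n)^{s}}$; for $a>0$, real $z<1$ and $\Re(s)>0$ it satisfies $\Gamma(s)\Phi(z,s,a)=\int_{0}^{\infty}\frac{x^{s-1}e^{-ax}}{1-ze^{-x}}dx$. $\Gamma$ is Euler's Gamma function. A complex matrix $A=(a_{j,k})$ is positive semidefinite if $\sum_{j,k}a_{j,k}w_j\overline{w_k}\ge0$ for all complex $w_j$. *)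

theory Defs
  imports "HOL-Analysis.Analysis"
begin

text \<open>Lerch transcendent on the region used in the statement (a > 0, real z < 1, Re s > 0),
  given by its integral representation
  Gamma(s) Phi(z,s,a) = integral over (0,inf) of x^(s-1) e^(-a x) / (1 - z e^(-x)) dx.\<close>
definition lerch_phi :: "real \<Rightarrow> complex \<Rightarrow> real \<Rightarrow> complex" where
  "lerch_phi z s a =
     integral {0<..} (\<lambda>x::real. (complex_of_real x powr (s - 1)) * complex_of_real (exp (- a * x))
        / complex_of_real (1 - z * exp (- x))) / Gamma s"

definition psd_matrix :: "nat \<Rightarrow> (nat \<Rightarrow> nat \<Rightarrow> complex) \<Rightarrow> bool" where
  "psd_matrix n A \<longleftrightarrow> (\<forall>w :: nat \<Rightarrow> complex.
      let q = (\<Sum>j=1..n. \<Sum>k=1..n. A j k * w j * cnj (w k)) in q \<in> \<real> \<and> 0 \<le> Re q)"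

end

theory Submission
  imports Defs
begin

text \<open>
  For \<open>x > 0\<close> one has \<open>x powr (s + cnj t - 1) = x powr (s - 1/2) * cnj (x powr (t - 1/2))\<close>,
  so by the integral representation each factor \<open>Gamma (s j + cnj (s k)) * Phi (z, s j + cnj (s k), a)\<close>
  equals \<open>\<integral> g j x * cnj (g k x) * \<omega> x\<close> over \<open>x > 0\<close>, with \<open>g j x = x powr (s j - 1/2)\<close> and the
  nonnegative weight \<open>\<omega> x = exp (- a * x) / (1 - z * exp (- x))\<close>. Multiplying a positive semidefinite
  matrix entrywise by such an integral Gram matrix keeps it positive semidefinite: the Hermitian form
  of the product at \<open>w\<close> is the \<open>\<omega>\<close>-weighted integral of the Hermitian forms of the original
  matrix at the vectors \<open>(w j * g j x)\<close>. Induction on the number of factors, starting from the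
  all-ones matrix, gives the theorem.
\<close>

lemma psd_matrix_cong:
  assumes "\<And>j k. j \<in> {1..n} \<Longrightarrow> k \<in> {1..n} \<Longrightarrow> A j k = B j k"
  shows "psd_matrix n A = psd_matrix n B"
proof -
  have "(\<Sum>j=1..n. \<Sum>k=1..n. A j k * w j * cnj (w k)) = (\<Sum>j=1..n. \<Sum>k=1..n. B j k * w j * cnj (w k))"
    for w using assms by (intro sum.cong refl) auto
  then show ?thesis unfolding psd_matrix_def by simp
qed

lemma psd_matrix_const_one: "psd_matrix n (\<lambda>j k. 1)"
  unfolding psd_matrix_def Let_def
proof
  fix w :: "nat \<Rightarrow> complex"
  have "(\<Sum>j=1..n. \<Sum>k=1..n. 1 * w j * cnj (w k)) = (\<Sum>j=1..n. w j) * cnj (\<Sum>k=1..n. w k)"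
    by (simp add: sum_product cnj_sum)
  also have "\<dots> = of_real ((cmod (\<Sum>j=1..n. w j))\<^sup>2)"
    by (rule complex_norm_square[symmetric])
  finally show "(\<Sum>j=1..n. \<Sum>k=1..n. 1 * w j * cnj (w k)) \<in> \<real> \<and>
      0 \<le> Re (\<Sum>j=1..n. \<Sum>k=1..n. 1 * w j * cnj (w k))"
    by simp
qed

lemma psd_matrix_mult_integral_gram:
  fixes A :: "nat \<Rightarrow> nat \<Rightarrow> complex" and g :: "nat \<Rightarrow> 'a::euclidean_space \<Rightarrow> complex"
    and \<omega> :: "'a \<Rightarrow> real"
  assumes psd: "psd_matrix n A"
    and integrable: "\<And>j k. j \<in> {1..n} \<Longrightarrow> k \<in> {1..n} \<Longrightarrow>
          (\<lambda>x. g j x * cnj (g k x) * of_real (\<omega> x)) integrable_on S"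
    and nonneg: "\<And>x. x \<in> S \<Longrightarrow> \<omega> x \<ge> 0"
  shows "psd_matrix n (\<lambda>j k. A j k * integral S (\<lambda>x. g j x * cnj (g k x) * of_real (\<omega> x)))"
  unfolding psd_matrix_def Let_def
proof
  fix w :: "nat \<Rightarrow> complex"
  define Q where "Q x = (\<Sum>j=1..n. \<Sum>k=1..n. A j k * (w j * g j x) * cnj (w k * g k x))" for x
  define h where "h j k x = A j k * w j * cnj (w k) * (g j x * cnj (g k x) * of_real (\<omega> x))"
    for j k x
  have Q_psd: "Q x \<in> \<real> \<and> 0 \<le> Re (Q x)" for x
    using psd unfolding psd_matrix_def Let_def Q_def
    by (erule_tac x="\<lambda>j. w j * g j x" in allE) simp
  have h_integrable: "h j k integrable_on S" if "j \<in> {1..n}" "k \<in> {1..n}" for j k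
    unfolding h_def using integrable[OF that] by (rule integrable_on_mult_right)
  have sum_h: "(\<Sum>j=1..n. \<Sum>k=1..n. h j k x) = Q x * of_real (\<omega> x)" for x
    unfolding Q_def h_def by (simp add: sum_distrib_left mult_ac)
  have Q\<omega>_integrable: "(\<lambda>x. Q x * of_real (\<omega> x)) integrable_on S"
    unfolding sum_h[symmetric] by (intro integrable_sum h_integrable) auto
  have "(\<Sum>j=1..n. \<Sum>k=1..n. A j k * integral S (\<lambda>x. g j x * cnj (g k x) * of_real (\<omega> x))
            * w j * cnj (w k))
      = (\<Sum>j=1..n. \<Sum>k=1..n. integral S (h j k))"
    unfolding h_def by (simp add: Henstock_Kurzweil_Integration.integral_mult_right mult_ac)
  also have "\<dots> = (\<Sum>j=1..n. integral S (\<lambda>x. \<Sum>k=1..n. h j k x))"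
    by (intro sum.cong refl integral_sum[symmetric] h_integrable) auto
  also have "\<dots> = integral S (\<lambda>x. \<Sum>j=1..n. \<Sum>k=1..n. h j k x)"
    by (intro integral_sum[symmetric] integrable_sum h_integrable) auto
  also have "\<dots> = integral S (\<lambda>x. Q x * of_real (\<omega> x))"
    unfolding sum_h ..
  finally have form_eq: "(\<Sum>j=1..n. \<Sum>k=1..n.
      A j k * integral S (\<lambda>x. g j x * cnj (g k x) * of_real (\<omega> x)) * w j * cnj (w k))
      = integral S (\<lambda>x. Q x * of_real (\<omega> x))" .
  have "Im (integral S (\<lambda>x. Q x * of_real (\<omega> x))) = integral S (\<lambda>x. Im (Q x * of_real (\<omega> x)))"
    using integral_linear[OF Q\<omega>_integrable bounded_linear_Im] by (simp add: o_def)
  also have "\<dots> = 0"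
    using Q_psd by (simp add: complex_is_Real_iff)
  finally have Im_eq: "Im (integral S (\<lambda>x. Q x * of_real (\<omega> x))) = 0" .
  have "Re (integral S (\<lambda>x. Q x * of_real (\<omega> x))) = integral S (\<lambda>x. Re (Q x * of_real (\<omega> x)))"
    using integral_linear[OF Q\<omega>_integrable bounded_linear_Re] by (simp add: o_def)
  also have "\<dots> \<ge> 0"
    using integrable_linear[OF Q\<omega>_integrable bounded_linear_Re] Q_psd nonneg
    by (intro integral_nonneg) (auto simp: o_def)
  finally have Re_ge: "Re (integral S (\<lambda>x. Q x * of_real (\<omega> x))) \<ge> 0" .
  show "(\<Sum>j=1..n. \<Sum>k=1..n.
      A j k * integral S (\<lambda>x. g j x * cnj (g k x) * of_real (\<omega> x)) * w j * cnj (w k)) \<in> \<real> \<and>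
    0 \<le> Re (\<Sum>j=1..n. \<Sum>k=1..n.
      A j k * integral S (\<lambda>x. g j x * cnj (g k x) * of_real (\<omega> x)) * w j * cnj (w k))"
    unfolding form_eq using Im_eq Re_ge by (simp add: complex_is_Real_iff)
qed

lemma psd_matrix_prod_integral_gram:
  fixes T :: "'l \<Rightarrow> nat \<Rightarrow> nat \<Rightarrow> complex" and g :: "'l \<Rightarrow> nat \<Rightarrow> 'a::euclidean_space \<Rightarrow> complex"
    and \<omega> :: "'l \<Rightarrow> 'a \<Rightarrow> real"
  assumes "finite L"
    and integrable: "\<And>l j k. l \<in> L \<Longrightarrow> j \<in> {1..n} \<Longrightarrow> k \<in> {1..n} \<Longrightarrow>
          (\<lambda>x. g l j x * cnj (g l k x) * of_real (\<omega> l x)) integrable_on S l"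
    and gram: "\<And>l j k. l \<in> L \<Longrightarrow> j \<in> {1..n} \<Longrightarrow> k \<in> {1..n} \<Longrightarrow>
          T l j k = integral (S l) (\<lambda>x. g l j x * cnj (g l k x) * of_real (\<omega> l x))"
    and nonneg: "\<And>l x. l \<in> L \<Longrightarrow> x \<in> S l \<Longrightarrow> \<omega> l x \<ge> 0"
  shows "psd_matrix n (\<lambda>j k. \<Prod>l\<in>L. T l j k)"
  using assms
proof (induction L rule: finite_induct)
  case empty
  then show ?case using psd_matrix_const_one by simp
next
  case (insert l L)
  have "psd_matrix n (\<lambda>j k. (\<Prod>l\<in>L. T l j k) *
      integral (S l) (\<lambda>x. g l j x * cnj (g l k x) * of_real (\<omega> l x)))"
    using insert by (intro psd_matrix_mult_integral_gram) auto
  then show ?case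
    using insert by (subst psd_matrix_cong) (auto simp: mult.commute)
qed

definition lerch_weight :: "real \<Rightarrow> real \<Rightarrow> real \<Rightarrow> real" where
  "lerch_weight z a x = exp (- a * x) / (1 - z * exp (- x))"

lemma lerch_denominator_ge:
  fixes z x :: real
  assumes "z < 1" "x \<ge> 0"
  shows "min 1 (1 - z) \<le> 1 - z * exp (- x)"
proof (cases "z \<le> 0")
  case True
  then show ?thesis by (simp add: mult_nonpos_nonneg)
next
  case False
  then have "z * exp (- x) \<le> z"
    using assms(2) by (simp add: mult_left_le)
  then show ?thesis by linarith
qed

lemma lerch_denominator_pos: "(z::real) < 1 \<Longrightarrow> x \<ge> 0 \<Longrightarrow> 1 - z * exp (- x) > 0"
  using lerch_denominator_ge[of z x] by simp

lemma lerch_weight_nonneg: "(z::real) < 1 \<Longrightarrow> x \<ge> 0 \<Longrightarrow> lerch_weight z a x \<ge> 0"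
  unfolding lerch_weight_def using lerch_denominator_pos[of z x] by simp

lemma lerch_integrand_absolutely_integrable:
  fixes s :: complex and a z :: real
  assumes "a > 0" "z < 1" "Re s > 0"
  shows "(\<lambda>x. of_real x powr (s - 1) * of_real (lerch_weight z a x)) absolutely_integrable_on {0<..}"
proof (rule measurable_bounded_by_integrable_imp_absolutely_integrable)
  define c where "c = min 1 (1 - z)"
  define F where "F t = complex_of_real t powr (s - 1) / of_real (exp (a * t))" for t
  have "c > 0" using assms by (simp add: c_def)
  have "F absolutely_integrable_on {0<..}"
    unfolding F_def by (rule absolutely_integrable_Gamma_integral[OF assms(3,1)])
  then have norm_F: "(\<lambda>x. norm (F x)) integrable_on {0<..}"
    by (simp add: absolutely_integrable_on_def)
  show "(\<lambda>x. norm (F x) * (1 / c)) integrable_on {0<..}"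
    using integrable_on_cmult_right[OF norm_F, of "1 / c"] by simp
  have "continuous_on {0<..} (\<lambda>x. of_real x powr (s - 1) * of_real (lerch_weight z a x))"
    unfolding lerch_weight_def using lerch_denominator_pos[OF assms(2)]
    by (intro continuous_intros) (auto simp: order.strict_implies_not_eq[symmetric])
  then show "(\<lambda>x. of_real x powr (s - 1) * of_real (lerch_weight z a x))
      \<in> borel_measurable (lebesgue_on {0<..})"
    by (rule continuous_imp_measurable_on_sets_lebesgue) auto
  show "{0::real<..} \<in> sets lebesgue" by simp
  fix x :: real
  assume "x \<in> {0<..}"
  then have c_le: "c \<le> 1 - z * exp (- x)"
    unfolding c_def using assms(2) by (intro lerch_denominator_ge) auto
  have "norm (of_real x powr (s - 1) * of_real (lerch_weight z a x))
      = norm (of_real x powr (s - 1)) * lerch_weight z a x"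
    using lerch_weight_nonneg[OF assms(2), of x a] \<open>x \<in> {0<..}\<close> by (simp add: norm_mult)
  also have "\<dots> = norm (F x) / (1 - z * exp (- x))"
    by (simp add: F_def lerch_weight_def norm_divide exp_minus divide_inverse norm_mult norm_inverse)
  also have "\<dots> \<le> norm (F x) * (1 / c)"
    using \<open>c > 0\<close> c_le by (simp add: frac_le)
  finally show "norm (of_real x powr (s - 1) * of_real (lerch_weight z a x)) \<le> norm (F x) * (1 / c)" .
qed

lemma Gamma_nonzero_Re_pos: "Re s > 0 \<Longrightarrow> Gamma s \<noteq> 0"
  by (intro Gamma_nonzero) (auto elim!: nonpos_Ints_cases)

lemma Gamma_mult_lerch_phi:
  assumes "Re s > 0"
  shows "Gamma s * lerch_phi z s a
    = integral {0<..} (\<lambda>x. of_real x powr (s - 1) * of_real (lerch_weight z a x))"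
  using Gamma_nonzero_Re_pos[OF assms]
  by (simp add: lerch_phi_def lerch_weight_def)

lemma powr_of_real_add_cnj:
  fixes x :: real and s t :: complex
  assumes "x > 0"
  shows "of_real x powr (s + cnj t - 1) = of_real x powr (s - 1/2) * cnj (of_real x powr (t - 1/2))"
  using assms by (simp add: powr_def Ln_of_real exp_cnj exp_add[symmetric] algebra_simps)

lemma lerch_gram_kernel:
  fixes a z :: real and s t :: complex
  assumes "a > 0" "z < 1" "Re s > 0" "Re t > 0"
  defines "K \<equiv> \<lambda>x. of_real x powr (s - 1/2) * cnj (of_real x powr (t - 1/2)) *
                     of_real (lerch_weight z a x)"
  shows "K integrable_on {0<..}"
    and "Gamma (s + cnj t) * lerch_phi z (s + cnj t) a = integral {0<..} K"
proof -
  have Re_pos: "Re (s + cnj t) > 0" using assms by simp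
  have K_eq: "of_real x powr (s + cnj t - 1) * of_real (lerch_weight z a x) = K x"
    if "x \<in> {0<..}" for x
    using that by (simp add: K_def powr_of_real_add_cnj)
  show "K integrable_on {0<..}"
    using set_lebesgue_integral_eq_integral(1)[OF
        lerch_integrand_absolutely_integrable[OF assms(1,2) Re_pos]] K_eq
    by (rule integrable_eq)
  show "Gamma (s + cnj t) * lerch_phi z (s + cnj t) a = integral {0<..} K"
    unfolding Gamma_mult_lerch_phi[OF Re_pos] using K_eq by (rule integral_cong)
qed

theorem mainTheorem14:
  fixes m n :: nat and a z :: "nat \<Rightarrow> real" and s :: "nat \<Rightarrow> nat \<Rightarrow> complex"
  assumes "\<And>l. 1 \<le> l \<Longrightarrow> l \<le> m \<Longrightarrow> a l > 0"
      and "\<And>l. 1 \<le> l \<Longrightarrow> l \<le> m \<Longrightarrow> z l < 1"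
      and "\<And>j l. 1 \<le> j \<Longrightarrow> j \<le> n \<Longrightarrow> 1 \<le> l \<Longrightarrow> l \<le> m \<Longrightarrow> Re (s j l) > 0"
  shows "psd_matrix n (\<lambda>j k. \<Prod>l=1..m. Gamma (s j l + cnj (s k l)) *
                                   lerch_phi (z l) (s j l + cnj (s k l)) (a l))"
proof (rule psd_matrix_prod_integral_gram)
  let ?g = "\<lambda>l j x. of_real x powr (s j l - 1/2)"
  let ?\<omega> = "\<lambda>l. lerch_weight (z l) (a l)"
  fix l j k
  assume "l \<in> {1..m}" "j \<in> {1..n}" "k \<in> {1..n}"
  then show "(\<lambda>x. ?g l j x * cnj (?g l k x) * of_real (?\<omega> l x)) integrable_on {0<..}"
    and "Gamma (s j l + cnj (s k l)) * lerch_phi (z l) (s j l + cnj (s k l)) (a l)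
      = integral {0<..} (\<lambda>x. ?g l j x * cnj (?g l k x) * of_real (?\<omega> l x))"
    using assms by (auto intro!: lerch_gram_kernel)
next
  fix l x
  assume "l \<in> {1..m}" "x \<in> {0::real<..}"
  then show "lerch_weight (z l) (a l) x \<ge> 0"
    using assms(2) by (auto intro: lerch_weight_nonneg)
qed simp

end
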